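(* Let $k\ge3$ be odd and $\ell\ge5$ be odd. There exists $m_0=m_0(k,\ell)$ such that for every $m\ge m_0$ the graph $H_m$ is $(C_k,C_\ell)$-Ramsey.
   Context: $H_m$ is the graph on pairwise disjoint vertex sets $V_1,\dots,V_5$, each of size $m$, whose edges are: a perfect matching between $V_1$ and $V_2$, a perfect matching between $V_3$ and $V_4$, and all possible edges between $V_i$ and $V_j$ for every other pair $\{i,j\}$ of distinct indices (there are no edges inside any $V_i$). A graph $G$ is $(H_1,H_2)$-Ramsey if every red/blue colouring of its edges contains a red copy of $H_1$ or a blue copy of $H_2$. $C_m$ is the cycle of length $m$. *)

theory Defs
  imports Main
begin

definition has_copy :: "'b set \<Rightarrow> 'b set set \<Rightarrow> 'a set set \<Rightarrow> ('a set \<Rightarrow> bool) \<Rightarrow> bool" where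
  "has_copy V1 E1 E col \<longleftrightarrow>
     (\<exists>f. inj_on f V1 \<and> (\<forall>e\<in>E1. f ` e \<in> E \<and> col (f ` e)))"

(* (H1,H2)-Ramsey: every red/blue colouring (red = True) of the edges has a red copy of H1
   or a blue copy of H2. *)
definition ramsey_graph ::
  "'a set set \<Rightarrow> 'b set \<Rightarrow> 'b set set \<Rightarrow> 'c set \<Rightarrow> 'c set set \<Rightarrow> bool" where
  "ramsey_graph E V1 E1 V2 E2 \<longleftrightarrow>
     (\<forall>c :: 'a set \<Rightarrow> bool. has_copy V1 E1 E c \<or> has_copy V2 E2 E (\<lambda>e. \<not> c e))"

definition cycle_V :: "nat \<Rightarrow> nat set" where
  "cycle_V n = {..<n}"

definition cycle_E :: "nat \<Rightarrow> nat set set" where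
  "cycle_E n = {{i, Suc i mod n} | i. i < n}"

(* H_m: vertices (i,a) with i \<in> {1..5} (the part V_i) and a < m.
   The perfect matchings between V_1,V_2 and between V_3,V_4 are taken to be
   (1,a)-(2,a) and (3,a)-(4,a) (any perfect matching gives an isomorphic graph). *)
definition H_V :: "nat \<Rightarrow> (nat \<times> nat) set" where
  "H_V m = {1..5} \<times> {..<m}"

definition H_E :: "nat \<Rightarrow> (nat \<times> nat) set set" where
  "H_E m = {{(i, a), (j, b)} | i j a b.
      i \<in> {1..5} \<and> j \<in> {1..5} \<and> a < m \<and> b < m \<and> i \<noteq> j \<and>
      (if {i, j} = {1, 2} \<or> {i, j} = {3, 4} then a = b else True)}"

end

theory Submission
  imports Defs "HOL-Library.Ramsey"
begin

(* For indices a < b < m, record which edges {(p, a), (q, b)} and {(p, a), (q, a)} of H_m are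
   red.  By Ramsey's theorem 3T + 1 indices share this pattern (the last one only serves as the
   partner b of the others).  Giving T of them, in increasing order, to each of the blocks
   V_1 V_2, V_3 V_4 and V_5 yields T copies of every part on which the colour of an edge depends
   only on the parts of its ends.  This reduced colouring of K_5 has a red triangle, a blue
   triangle or a blue 5-cycle, and since every block has at most two parts, such a cycle has an
   edge between two blocks.  All copies of the two parts of that edge are adjacent, so
   zigzagging along it lengthens the cycle by any even amount. *)

definition cyclically :: "('a \<Rightarrow> 'a \<Rightarrow> bool) \<Rightarrow> 'a list \<Rightarrow> bool" where
  "cyclically P xs \<longleftrightarrow> successively P (xs @ [hd xs])"

lemma cyclically_map: "cyclically P (map f xs) \<longleftrightarrow> cyclically (\<lambda>x y. P (f x) (f y)) xs"
proof (cases "xs = []")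
  case False
  then have "map f xs @ [hd (map f xs)] = map f (xs @ [hd xs])" by (simp add: hd_map)
  then show ?thesis by (simp only: cyclically_def successively_map)
qed (simp add: cyclically_def)

lemma successively_neq_if_distinct:
  "distinct xs \<Longrightarrow> successively P xs \<Longrightarrow> successively (\<lambda>x y. x \<noteq> y \<and> P x y) xs"
  by (induction xs rule: induct_list012) auto

lemma has_copy_cycleI:
  assumes "distinct vs" and "cyclically (\<lambda>u v. {u, v} \<in> E \<and> P {u, v}) vs"
  shows "has_copy (cycle_V (length vs)) (cycle_E (length vs)) E P"
proof -
  let ?n = "length vs"
  have "{vs ! i, vs ! (Suc i mod ?n)} \<in> E \<and> P {vs ! i, vs ! (Suc i mod ?n)}" if "i < ?n" for i
  proof -
    have "(vs @ [hd vs]) ! Suc i = vs ! (Suc i mod ?n)"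
    proof (cases "Suc i = ?n")
      case True
      then have "vs \<noteq> []" by auto
      with True show ?thesis by (simp add: nth_append hd_conv_nth)
    qed (use that in \<open>simp add: nth_append\<close>)
    moreover have "(vs @ [hd vs]) ! i = vs ! i" using that by (simp add: nth_append)
    ultimately show ?thesis
      using successively_nth[OF assms(2)[unfolded cyclically_def], of i] that by simp
  qed
  moreover have "inj_on (\<lambda>i. vs ! i) {..<?n}"
    using assms(1) by (simp add: inj_on_def nth_eq_iff_index_eq)
  ultimately show ?thesis
    unfolding has_copy_def cycle_V_def cycle_E_def by (auto intro!: exI[of _ "\<lambda>i. vs ! i"])
qed

fun zigzag :: "'a \<Rightarrow> 'a \<Rightarrow> nat \<Rightarrow> ('a \<times> nat) list" where
  "zigzag x y 0 = [(x, 0)]"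
| "zigzag x y (Suc j) = zigzag x y j @ [(y, Suc j), (x, Suc j)]"

lemma length_zigzag [simp]: "length (zigzag x y j) = 2 * j + 1"
  by (induction j) auto

lemma zigzag_ne_Nil [simp]: "zigzag x y j \<noteq> []"
  by (cases j) auto

lemma hd_zigzag [simp]: "hd (zigzag x y j) = (x, 0)"
  by (induction j) auto

lemma last_zigzag [simp]: "last (zigzag x y j) = (x, j)"
  by (cases j) auto

lemma set_zigzag: "set (zigzag x y j) = {x} \<times> {..j} \<union> {y} \<times> {1..j}"
proof (induction j)
  case (Suc j)
  have "{x} \<times> {..Suc j} = insert (x, Suc j) ({x} \<times> {..j})"
    "{y} \<times> {1..Suc j} = insert (y, Suc j) ({y} \<times> {1..j})"
    by (auto simp: le_Suc_eq)
  with Suc show ?case by auto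
qed simp

lemma distinct_zigzag: "x \<noteq> y \<Longrightarrow> distinct (zigzag x y j)"
  by (induction j) (auto simp: set_zigzag)

lemma successively_zigzag: "successively (\<lambda>a b. {fst a, fst b} = {x, y}) (zigzag x y j)"
  by (induction j) (auto simp: successively_append_iff)

lemma has_copy_cycle_blowup:
  fixes phi :: "'i \<times> nat \<Rightarrow> 'v"
  assumes inj: "inj_on phi (I \<times> {..<T})"
    and edge: "\<And>p q r s. p \<in> I \<Longrightarrow> q \<in> I \<Longrightarrow> p \<noteq> q \<Longrightarrow> r < T \<Longrightarrow> s < T \<Longrightarrow>
      A p q \<or> r = s \<Longrightarrow> R p q \<Longrightarrow> {phi (p, r), phi (q, s)} \<in> E \<and> P {phi (p, r), phi (q, s)}"
    and w: "distinct (x # y # ws)" "set (x # y # ws) \<subseteq> I" "cyclically R (x # y # ws)" "A x y"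
    and "j < T"
  shows "has_copy (cycle_V (2 * j + length ws + 2)) (cycle_E (2 * j + length ws + 2)) E P"
proof -
  define Q where "Q = (\<lambda>a b. {phi a, phi b} \<in> E \<and> P {phi a, phi b})"
  have Q_commute: "Q a b \<longleftrightarrow> Q b a" for a b
    by (simp add: Q_def insert_commute)
  have R_xy: "R x y" and R_tail: "successively R (y # ws @ [x])"
    using w(3) by (simp_all add: cyclically_def)
  have Q_xy: "Q (x, r) (y, s)" if "r < T" "s < T" for r s
    unfolding Q_def using edge[of x y r s] w R_xy that by auto
  define vs where "vs = zigzag x y j @ map (\<lambda>p. (p, 0)) (y # ws)"
  have zigzag_walk: "successively Q (zigzag x y j)"
  proof (rule successively_mono[OF successively_zigzag])
    fix a b assume "a \<in> set (zigzag x y j)" "b \<in> set (zigzag x y j)" "{fst a, fst b} = {x, y}"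
    then show "Q a b"
      using Q_xy Q_commute \<open>j < T\<close> by (auto simp: set_zigzag doubleton_eq_iff)
  qed
  have column_0_walk: "successively Q (map (\<lambda>p. (p, 0)) (y # ws @ [x]))"
    unfolding successively_map
  proof (rule successively_mono[OF successively_neq_if_distinct[OF _ R_tail]])
    show "distinct (y # ws @ [x])" using w(1) by auto
    fix p q assume "p \<in> set (y # ws @ [x])" "q \<in> set (y # ws @ [x])" "p \<noteq> q \<and> R p q"
    then show "Q (p, 0) (q, 0)"
      unfolding Q_def using edge[of p q 0 0] w(2) \<open>j < T\<close> by auto
  qed
  have vs_closed: "vs @ [hd vs] = zigzag x y j @ map (\<lambda>p. (p, 0)) (y # ws @ [x])"
    by (simp add: vs_def)
  have "cyclically Q vs"
    unfolding cyclically_def vs_closed successively_append_iff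
    using zigzag_walk column_0_walk Q_xy \<open>j < T\<close> by simp
  moreover have "distinct vs"
    using w(1) unfolding vs_def distinct_append
    by (auto simp: distinct_zigzag set_zigzag distinct_map inj_on_def)
  moreover have "set vs \<subseteq> I \<times> {..<T}"
    using w(2) \<open>j < T\<close> by (auto simp: vs_def set_zigzag)
  ultimately have "distinct (map phi vs)" "cyclically (\<lambda>u v. {u, v} \<in> E \<and> P {u, v}) (map phi vs)"
    by (auto simp: distinct_map cyclically_map Q_def intro: inj_on_subset[OF inj])
  then have "has_copy (cycle_V (length (map phi vs))) (cycle_E (length (map phi vs))) E P"
    by (rule has_copy_cycleI)
  moreover have "length (map phi vs) = 2 * j + length ws + 2"
    by (simp add: vs_def)
  ultimately show ?thesis by simp
qed

(* V_1, V_2 form block 0, V_3, V_4 block 1 and V_5 block 2: the matchings of H_m join exactly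
   the two parts of a block. *)
definition block :: "nat \<Rightarrow> nat" where
  "block p = (p - 1) div 2"

lemma block_le_2: "p \<in> {1..5} \<Longrightarrow> block p \<le> 2"
  by (auto simp: block_def)

lemma matched_iff_same_block:
  assumes "p \<in> {1..5}" "q \<in> {1..5}" "p \<noteq> q"
  shows "({p, q} = {1, 2} \<or> {p, q} = {3, 4}) \<longleftrightarrow> block p = block q"
proof -
  have "p \<in> {1, 2, 3, 4, 5}" "q \<in> {1, 2, 3, 4, 5}" using assms(1,2) by auto
  then show ?thesis using assms(3) unfolding block_def
    by (elim insertE emptyE) (simp_all add: doubleton_eq_iff)
qed

lemma doubleton_in_H_E:
  assumes "p \<in> {1..5}" "q \<in> {1..5}" "p \<noteq> q" "a < m" "b < m" "block p = block q \<Longrightarrow> a = b"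
  shows "{(p, a), (q, b)} \<in> H_E m"
proof -
  have "if {p, q} = {1, 2} \<or> {p, q} = {3, 4} then a = b else True"
    using assms(6) matched_iff_same_block[OF assms(1-3)] by simp
  then show ?thesis unfolding H_E_def using assms(1-5) by blast
qed

(* All triangles and 5-cycles of K_5 on {1..5}, each rotated to start with an edge between
   different blocks. *)
definition K5_triangles :: "nat list list" where
  "K5_triangles = [[1, 3, 2], [1, 4, 2], [1, 5, 2], [1, 3, 4], [1, 3, 5], [1, 4, 5], [2, 3, 4],
     [2, 3, 5], [2, 4, 5], [3, 5, 4]]"

definition K5_pentagons :: "nat list list" where
  "K5_pentagons = [[2, 3, 4, 5, 1], [2, 3, 5, 4, 1], [2, 4, 3, 5, 1], [2, 4, 5, 3, 1],
     [2, 5, 3, 4, 1], [2, 5, 4, 3, 1], [1, 3, 2, 4, 5], [1, 3, 2, 5, 4], [1, 3, 4, 2, 5],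
     [1, 3, 5, 2, 4], [1, 4, 2, 3, 5], [1, 4, 3, 2, 5]]"

lemma length_K5_triangles: "w \<in> set K5_triangles \<Longrightarrow> length w = 3"
  and length_K5_pentagons: "w \<in> set K5_pentagons \<Longrightarrow> length w = 5"
  by (auto simp: K5_triangles_def K5_pentagons_def)

lemma K5_cycle_shape:
  "w \<in> set K5_triangles \<union> set K5_pentagons \<Longrightarrow>
     \<exists>x y ws. w = x # y # ws \<and> distinct w \<and> set w \<subseteq> {1..5} \<and> block x \<noteq> block y"
  by (auto simp: K5_triangles_def K5_pentagons_def block_def)

(* Without a monochromatic triangle both colour classes of K_5 are 5-cycles. *)
lemma K5_colouring:
  fixes R :: "nat \<Rightarrow> nat \<Rightarrow> bool"
  assumes sym: "\<And>p q. R p q = R q p"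
  shows "(\<exists>w\<in>set K5_triangles. cyclically R w \<or> cyclically (\<lambda>p q. \<not> R p q) w)
    \<or> (\<exists>w\<in>set K5_pentagons. cyclically (\<lambda>p q. \<not> R p q) w)"
  using sym[of 2 1] sym[of 3 1] sym[of 4 1] sym[of 5 1] sym[of 3 2] sym[of 4 2] sym[of 5 2]
    sym[of 4 3] sym[of 5 3] sym[of 5 4]
  unfolding K5_triangles_def K5_pentagons_def cyclically_def
  by (simp; cases "R 1 3"; cases "R 1 4"; cases "R 2 3"; cases "R 2 4"; cases "R 1 5"; cases "R 2 5";
      simp?; blast)

lemma ramsey_partn_finite_colours:
  assumes "finite S"
  shows "\<exists>N. partn {..<N::nat} q r S"
proof -
  obtain h where h: "bij_betw h S {..<card S}"
    using ex_bij_betw_finite_nat[OF assms] atLeast0LessThan by metis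
  obtain N :: nat where N: "partn_lst {..<N} (replicate (card S) q) r"
    using ramsey_full by blast
  have "\<exists>\<xi>\<in>S. monochromatic {..<N} q r f \<xi>" if f: "f \<in> [{..<N}]\<^bsup>r\<^esup> \<rightarrow> S" for f
  proof -
    have "h \<circ> f \<in> [{..<N}]\<^bsup>r\<^esup> \<rightarrow> {..<card S}"
      using f bij_betwE[OF h] by fastforce
    then obtain i H where i: "i < card S" and H: "H \<in> [{..<N}]\<^bsup>q\<^esup>"
      and mono: "(h \<circ> f) ` [H]\<^bsup>r\<^esup> \<subseteq> {i}"
      by (rule partn_lstE[OF N]) auto
    have "f X = inv_into S h i" if "X \<in> [H]\<^bsup>r\<^esup>" for X
    proof -
      have "X \<in> [{..<N}]\<^bsup>r\<^esup>" using that H by (auto simp: nsets_def)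
      then show ?thesis
        using mono that f h by (force simp: bij_betw_def inv_into_f_f)
    qed
    moreover have "inv_into S h i \<in> S"
      using h i by (metis bij_betw_def inv_into_into lessThan_iff)
    ultimately show ?thesis
      using H unfolding monochromatic_def by blast
  qed
  then show ?thesis unfolding partn_def by blast
qed

lemma ramsey_sorted_list:
  assumes "finite S"
  obtains N :: nat where "\<And>f. (\<And>a b. f a b \<in> S) \<Longrightarrow> \<exists>xs t. length xs = n \<and> sorted_wrt (<) xs \<and>
      set xs \<subseteq> {..<N} \<and> (\<forall>i j. i < j \<longrightarrow> j < n \<longrightarrow> f (xs ! i) (xs ! j) = t)"
proof -
  obtain N where N: "partn {..<N::nat} n 2 S"
    using ramsey_partn_finite_colours[OF assms] by blast
  have "\<exists>xs t. length xs = n \<and> sorted_wrt (<) xs \<and> set xs \<subseteq> {..<N} \<and>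
      (\<forall>i j. i < j \<longrightarrow> j < n \<longrightarrow> f (xs ! i) (xs ! j) = t)" if f: "\<And>a b. f a b \<in> S" for f
  proof -
    have "(\<lambda>X. f (Min X) (Max X)) \<in> [{..<N}]\<^bsup>2\<^esup> \<rightarrow> S" using f by blast
    then obtain t H where H: "H \<in> [{..<N}]\<^bsup>n\<^esup>" and mono: "(\<lambda>X. f (Min X) (Max X)) ` [H]\<^bsup>2\<^esup> \<subseteq> {t}"
      using N unfolding partn_def monochromatic_def by blast
    define xs where "xs = sorted_list_of_set H"
    have fin: "finite H" and card: "card H = n" and sub: "H \<subseteq> {..<N}"
      using H by (auto simp: nsets_def)
    have sorted: "sorted_wrt (<) xs" and set_xs: "set xs = H" and len: "length xs = n"
      using fin card by (simp_all add: xs_def)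
    have "f (xs ! i) (xs ! j) = t" if "i < j" "j < n" for i j
    proof -
      have lt: "xs ! i < xs ! j" using sorted_wrt_nth_less[OF sorted that(1)] that len by simp
      have "{xs ! i, xs ! j} \<in> [H]\<^bsup>2\<^esup>" using lt that len set_xs by auto
      then have "f (Min {xs ! i, xs ! j}) (Max {xs ! i, xs ! j}) = t" using mono by blast
      then show ?thesis using lt by simp
    qed
    then show ?thesis using sorted set_xs len sub by (intro exI[of _ xs] exI[of _ t]) auto
  qed
  then show ?thesis by (rule that)
qed

definition pair_pattern ::
  "((nat \<times> nat) set \<Rightarrow> bool) \<Rightarrow> nat \<Rightarrow> nat \<Rightarrow> (nat \<times> nat) set \<times> (nat \<times> nat) set" where
  "pair_pattern c a b =
     ({(p, q) \<in> {1..5} \<times> {1..5}. c {(p, a), (q, b)}}, {(p, q) \<in> {1..5} \<times> {1..5}. c {(p, a), (q, a)}})"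

lemma pair_pattern_eqD:
  assumes "pair_pattern c a b = pair_pattern c a' b'" "p \<in> {1..5}" "q \<in> {1..5}"
  shows "c {(p, a), (q, b)} = c {(p, a'), (q, b')}" and "c {(p, a), (q, a)} = c {(p, a'), (q, a')}"
proof -
  have "(p, q) \<in> fst (pair_pattern c a b) \<longleftrightarrow> (p, q) \<in> fst (pair_pattern c a' b')"
    "(p, q) \<in> snd (pair_pattern c a b) \<longleftrightarrow> (p, q) \<in> snd (pair_pattern c a' b')"
    using assms(1) by simp_all
  then show "c {(p, a), (q, b)} = c {(p, a'), (q, b')}" "c {(p, a), (q, a)} = c {(p, a'), (q, a')}"
    using assms(2,3) by (simp_all add: pair_pattern_def)
qed

(* phi (p, r), r < T, are copies of part p inside V_p: copies of parts in different blocks are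
   adjacent, copies of the two parts of a block are adjacent when r = s, and on all these edges
   c depends only on the parts. *)
definition canonical_embedding ::
  "nat \<Rightarrow> nat \<Rightarrow> ((nat \<times> nat) set \<Rightarrow> bool) \<Rightarrow> (nat \<times> nat \<Rightarrow> nat \<times> nat) \<Rightarrow> bool" where
  "canonical_embedding m T c phi \<longleftrightarrow> inj_on phi ({1..5} \<times> {..<T}) \<and>
     (\<forall>p\<in>{1..5}. \<forall>q\<in>{1..5}. \<forall>r<T. \<forall>s<T. p \<noteq> q \<longrightarrow> block p \<noteq> block q \<or> r = s \<longrightarrow>
        {phi (p, r), phi (q, s)} \<in> H_E m \<and> c {phi (p, r), phi (q, s)} = c {phi (p, 0), phi (q, 0)})"

definition column :: "nat \<Rightarrow> nat \<Rightarrow> nat \<Rightarrow> nat" where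
  "column T p r = block p * T + r"

lemma column_less_3T:
  assumes "p \<in> {1..5}" "r < T"
  shows "column T p r < 3 * T"
proof -
  have "block p * T \<le> 2 * T" using block_le_2[OF assms(1)] by (rule mult_le_mono1)
  then show ?thesis using assms(2) unfolding column_def by linarith
qed

lemma column_less_column:
  assumes "block p < block q" "r < T"
  shows "column T p r < column T q s"
proof -
  have "block p * T + T \<le> block q * T" using mult_le_mono1[OF Suc_leI[OF assms(1)], of T] by simp
  then show ?thesis using assms(2) unfolding column_def by linarith
qed

lemma homogeneous_colour_from_sorted_list:
  assumes hom: "\<And>i j. i < j \<Longrightarrow> j \<le> 3 * T \<Longrightarrow> pair_pattern c (xs ! i) (xs ! j) = t"
    and p: "p \<in> {1..5}" and q: "q \<in> {1..5}" and adj: "block p \<noteq> block q \<or> r = s"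
    and r: "r < T" and s: "s < T"
  shows "c {(p, xs ! column T p r), (q, xs ! column T q s)} =
    c {(p, xs ! column T p 0), (q, xs ! column T q 0)}"
proof -
  have "0 < T" using r by simp
  have lower: "c {(p', xs ! column T p' r'), (q', xs ! column T q' s')} =
      c {(p', xs ! column T p' 0), (q', xs ! column T q' 0)}"
    if "p' \<in> {1..5}" "q' \<in> {1..5}" "block p' < block q'" "r' < T" "s' < T" for p' q' r' s'
  proof (rule pair_pattern_eqD(1)[OF trans[OF hom hom[symmetric]] that(1,2)])
    show "column T p' r' < column T q' s'" "column T p' 0 < column T q' 0"
      using column_less_column[OF that(3)] that(4) \<open>0 < T\<close> by blast+
    show "column T q' s' \<le> 3 * T" "column T q' 0 \<le> 3 * T"
      using column_less_3T[OF that(2)] that(5) \<open>0 < T\<close> by (blast intro: less_imp_le)+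
  qed
  consider "block p < block q" | "block q < block p" | "block p = block q" "r = s"
    using adj by linarith
  then show ?thesis
  proof cases
    case 1
    then show ?thesis using lower p q r s by blast
  next
    case 2
    then show ?thesis using lower[OF q p _ s r] by (simp add: insert_commute)
  next
    case 3
    have "c {(p, xs ! column T p r), (q, xs ! column T p r)} =
        c {(p, xs ! column T p 0), (q, xs ! column T p 0)}"
      using pair_pattern_eqD(2)[OF trans[OF hom hom[symmetric]] p q] column_less_3T[OF p] r \<open>0 < T\<close>
      by blast
    then show ?thesis using 3 by (simp add: column_def)
  qed
qed

lemma canonical_embedding_from_sorted_list:
  assumes len: "length xs = 3 * T + 1" and sorted: "sorted_wrt (<) xs" and sub: "set xs \<subseteq> {..<m}"
    and hom: "\<And>i j. i < j \<Longrightarrow> j \<le> 3 * T \<Longrightarrow> pair_pattern c (xs ! i) (xs ! j) = t"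
  shows "canonical_embedding m T c (\<lambda>(p, r). (p, xs ! column T p r))"
  unfolding canonical_embedding_def prod.case
proof (intro conjI inj_onI ballI allI impI)
  fix u v assume u: "u \<in> {1..5} \<times> {..<T}" and v: "v \<in> {1..5} \<times> {..<T}"
    and eq: "(\<lambda>(p, r). (p, xs ! column T p r)) u = (\<lambda>(p, r). (p, xs ! column T p r)) v"
  obtain p r q s where uv: "u = (p, r)" "v = (q, s)" by fastforce
  have "(p, xs ! column T p r) = (q, xs ! column T q s)" using eq unfolding uv prod.case .
  then have "p = q" and xs_eq: "xs ! column T p r = xs ! column T p s" by auto
  have "p \<in> {1..5}" "r < T" "s < T" using u v \<open>p = q\<close> by (simp_all add: uv)
  then have "column T p r < length xs" "column T p s < length xs"
    using column_less_3T len by fastforce+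
  moreover have "distinct xs" using sorted by (simp add: strict_sorted_iff)
  ultimately have "column T p r = column T p s" using xs_eq by (simp add: nth_eq_iff_index_eq)
  then show "u = v" using \<open>p = q\<close> by (simp add: uv column_def)
next
  fix p q r s
  assume p: "p \<in> {1..5}" and q: "q \<in> {1..5}" and "r < T" "s < T" "p \<noteq> q"
    and adj: "block p \<noteq> block q \<or> r = s"
  have "xs ! column T p r \<in> set xs" "xs ! column T q s \<in> set xs"
    using column_less_3T[OF p \<open>r < T\<close>] column_less_3T[OF q \<open>s < T\<close>] len by simp_all
  then have "xs ! column T p r < m" "xs ! column T q s < m" using sub by auto
  moreover have "block p = block q \<Longrightarrow> xs ! column T p r = xs ! column T q s"
    using adj by (simp add: column_def)
  ultimately show "{(p, xs ! column T p r), (q, xs ! column T q s)} \<in> H_E m"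
    using doubleton_in_H_E[OF p q \<open>p \<noteq> q\<close>] by simp
  show "c {(p, xs ! column T p r), (q, xs ! column T q s)} =
      c {(p, xs ! column T p 0), (q, xs ! column T q 0)}"
    by (rule homogeneous_colour_from_sorted_list[OF hom p q adj \<open>r < T\<close> \<open>s < T\<close>])
qed

lemma ex_canonical_embedding: "\<exists>m0. \<forall>m\<ge>m0. \<forall>c. \<exists>phi. canonical_embedding m T c phi"
proof -
  define S :: "((nat \<times> nat) set \<times> (nat \<times> nat) set) set"
    where "S = Pow ({1..5} \<times> {1..5}) \<times> Pow ({1..5} \<times> {1..5})"
  have "finite S" by (simp add: S_def)
  then obtain N :: nat where N: "\<And>f. (\<And>a b. f a b \<in> S) \<Longrightarrow> \<exists>xs t. length xs = 3 * T + 1 \<and>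
      sorted_wrt (<) xs \<and> set xs \<subseteq> {..<N} \<and>
      (\<forall>i j. i < j \<longrightarrow> j < 3 * T + 1 \<longrightarrow> f (xs ! i) (xs ! j) = t)"
    by (rule ramsey_sorted_list[where n = "3 * T + 1"]) blast
  have "\<exists>phi. canonical_embedding m T c phi" if "N \<le> m" for m c
  proof -
    have "pair_pattern c a b \<in> S" for a b by (auto simp: S_def pair_pattern_def)
    then obtain xs t where "length xs = 3 * T + 1" "sorted_wrt (<) xs" "set xs \<subseteq> {..<N}"
      and hom: "\<forall>i j. i < j \<longrightarrow> j < 3 * T + 1 \<longrightarrow> pair_pattern c (xs ! i) (xs ! j) = t"
      using N by blast
    moreover have "set xs \<subseteq> {..<m}" using \<open>set xs \<subseteq> {..<N}\<close> that by auto
    ultimately have "canonical_embedding m T c (\<lambda>(p, r). (p, xs ! column T p r))"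
      by (intro canonical_embedding_from_sorted_list[where t = t]) auto
    then show ?thesis by blast
  qed
  then show ?thesis by blast
qed

lemma canonical_embedding_odd_cycle:
  assumes phi: "canonical_embedding m T c phi"
    and w: "w \<in> set K5_triangles \<union> set K5_pentagons"
      "cyclically (\<lambda>p q. c {phi (p, 0), phi (q, 0)} = col) w"
    and n: "odd n" "length w \<le> n" "n \<le> T"
  shows "has_copy (cycle_V n) (cycle_E n) (H_E m) (\<lambda>e. c e = col)"
proof -
  obtain x y ws where xyws: "w = x # y # ws" "distinct w" "set w \<subseteq> {1..5}" "block x \<noteq> block y"
    using K5_cycle_shape[OF w(1)] by blast
  have "odd (length w)"
    using w(1) length_K5_triangles length_K5_pentagons by fastforce
  then have n_eq: "n = 2 * ((n - length w) div 2) + length ws + 2"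
    using n(1,2) xyws(1) by (auto elim!: oddE)
  have "(n - length w) div 2 \<le> n - length w" by (rule div_le_dividend)
  then have j: "(n - length w) div 2 < T" using n(2,3) xyws(1) by simp
  have edge: "{phi (p, r), phi (q, s)} \<in> H_E m \<and> c {phi (p, r), phi (q, s)} = col"
    if "p \<in> {1..5}" "q \<in> {1..5}" "p \<noteq> q" "r < T" "s < T" "block p \<noteq> block q \<or> r = s"
      "c {phi (p, 0), phi (q, 0)} = col" for p q r s
    using phi[unfolded canonical_embedding_def, THEN conjunct2, rule_format, OF that(1,2,4,5,3,6)] that(7)
    by simp
  have "distinct (x # y # ws)" "set (x # y # ws) \<subseteq> {1..5}"
    "cyclically (\<lambda>p q. c {phi (p, 0), phi (q, 0)} = col) (x # y # ws)"
    using xyws w(2) by simp_all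
  from has_copy_cycle_blowup[where A = "\<lambda>p q. block p \<noteq> block q"
      and R = "\<lambda>p q. c {phi (p, 0), phi (q, 0)} = col" and P = "\<lambda>e. c e = col",
      OF phi[unfolded canonical_embedding_def, THEN conjunct1] edge this xyws(4) j]
  have "has_copy (cycle_V (2 * ((n - length w) div 2) + length ws + 2))
      (cycle_E (2 * ((n - length w) div 2) + length ws + 2)) (H_E m) (\<lambda>e. c e = col)" .
  then show ?thesis using n_eq by simp
qed

lemma canonical_embedding_red_or_blue_cycle:
  assumes phi: "canonical_embedding m T c phi"
    and k: "odd k" "3 \<le> k" "k \<le> T" and l: "odd l" "5 \<le> l" "l \<le> T"
  shows "has_copy (cycle_V k) (cycle_E k) (H_E m) c \<or>
    has_copy (cycle_V l) (cycle_E l) (H_E m) (\<lambda>e. \<not> c e)"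
proof -
  define R where "R = (\<lambda>p q. c {phi (p, 0), phi (q, 0)})"
  have "R p q = R q p" for p q by (simp add: R_def insert_commute)
  then consider (red) w where "w \<in> set K5_triangles" "cyclically R w"
    | (blue) w where "w \<in> set K5_triangles \<union> set K5_pentagons" "cyclically (\<lambda>p q. \<not> R p q) w"
    using K5_colouring by blast
  then show ?thesis
  proof cases
    case red
    have "w \<in> set K5_triangles \<union> set K5_pentagons" using red(1) by simp
    moreover have "cyclically (\<lambda>p q. c {phi (p, 0), phi (q, 0)} = True) w"
      using red(2) by (simp add: R_def)
    moreover have "length w \<le> k" using length_K5_triangles[OF red(1)] k(2) by simp
    ultimately have "has_copy (cycle_V k) (cycle_E k) (H_E m) (\<lambda>e. c e = True)"
      using canonical_embedding_odd_cycle[OF phi _ _ k(1) _ k(3)] by blast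
    then show ?thesis by simp
  next
    case blue
    have "cyclically (\<lambda>p q. c {phi (p, 0), phi (q, 0)} = False) w"
      using blue(2) by (simp add: R_def)
    moreover have "length w \<le> l"
      using blue(1) length_K5_triangles length_K5_pentagons l(2) by fastforce
    ultimately have "has_copy (cycle_V l) (cycle_E l) (H_E m) (\<lambda>e. c e = False)"
      using canonical_embedding_odd_cycle[OF phi blue(1) _ l(1) _ l(3)] by blast
    then show ?thesis by simp
  qed
qed

theorem lemma3p3:
  fixes k l :: nat
  assumes "odd k" "k \<ge> 3" "odd l" "l \<ge> 5"
  shows "\<exists>m0. \<forall>m\<ge>m0.
           ramsey_graph (H_E m) (cycle_V k) (cycle_E k) (cycle_V l) (cycle_E l)"
proof -
  obtain m0 where m0: "\<forall>m\<ge>m0. \<forall>c. \<exists>phi. canonical_embedding m (k + l) c phi"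
    using ex_canonical_embedding by blast
  have "has_copy (cycle_V k) (cycle_E k) (H_E m) c \<or>
      has_copy (cycle_V l) (cycle_E l) (H_E m) (\<lambda>e. \<not> c e)" if "m0 \<le> m" for m c
  proof -
    obtain phi where "canonical_embedding m (k + l) c phi" using m0 \<open>m0 \<le> m\<close> by blast
    from canonical_embedding_red_or_blue_cycle[OF this assms(1,2) le_add1 assms(3,4) le_add2]
    show ?thesis .
  qed
  then show ?thesis unfolding ramsey_graph_def by blast
qed

end
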